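(* Let $\mathcal T$ be a tube, let $\phi=\{M_1,\dots,M_n\}$ be a brick set in $\mathcal T$, and let $C=(\dim\mathrm{Ext}^1_{\mathcal T}(M_i,M_j))_{i,j}$ be its adjacency matrix. If $C$ is irreducible, then there is a permutation matrix $P$ such that $P^TCP$ is the $n\times n$ cyclic matrix whose entries are $1$ at positions $(i,i+1)$ for $1\le i\le n-1$ and at $(n,1)$, and $0$ elsewhere (for $n=1$ this is the matrix $(1)$).
   Context: $\Bbbk$ is algebraically closed. A tube (of rank $r\ge1$) is the $\Bbbk$-linear abelian category of finite-dimensional nilpotent representations of the quiver with $r$ vertices forming an oriented cycle (for $r=1$, one vertex with one loop); it is a uniserial hereditary category with Auslander–Reiten translation $\tau$ and Serre duality $\mathrm{Ext}^1(X,Y)\cong D\mathrm{Hom}(Y,\tau X)$. A brick is an object $M$ with $\mathrm{Hom}(M,M)=\Bbbk$; a brick set is a finite set of bricks $\{M_1,\dots,M_n\}$ with $\dim\mathrm{Hom}(M_i,M_j)=\delta_{ij}$. An $n\times n$ matrix $C$ is reducible if either $n\ge2$ and there is a permutation matrix $P$ with $P^TCP=\begin{pmatrix}C_1&C_2\\0&C_3\end{pmatrix}$ with $C_1,C_3$ square of positive size, or $n=1$ and $C=0$; otherwise $C$ is irreducible. *)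

theory Defs
  imports "Jordan_Normal_Form.Matrix" "HOL-Computational_Algebra.Polynomial"
          "HOL-Library.Function_Algebras"
begin

text \<open>The cyclic quiver of rank r has vertices 0,...,r-1 and arrows i -> (i+1) mod r
  (for r = 1 a single loop).  A representation is a pair (d, A): d i is the dimension
  of the space k^(d i) at vertex i, and A i is the (d((i+1) mod r) x d i)-matrix
  of the arrow starting at i.\<close>

type_synonym 'k rep = "(nat \<Rightarrow> nat) \<times> (nat \<Rightarrow> 'k mat)"

fun path_map :: "nat \<Rightarrow> 'k::field rep \<Rightarrow> nat \<Rightarrow> nat \<Rightarrow> 'k mat" where
  "path_map r (d, A) i 0 = 1\<^sub>m (d i)"
| "path_map r (d, A) i (Suc m) = A ((i + m) mod r) * path_map r (d, A) i m"

definition tube_obj :: "nat \<Rightarrow> 'k::field rep \<Rightarrow> bool" where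
  "tube_obj r M \<longleftrightarrow>
     (\<forall>i<r. snd M i \<in> carrier_mat (fst M (Suc i mod r)) (fst M i)) \<and>
     (\<exists>N. \<forall>i<r. path_map r M i N = 0\<^sub>m (fst M i) (fst M i))"

text \<open>Families of matrices are encoded by their entries, F i a b, so that they form a
  vector space over 'k (pointwise operations).\<close>
definition scal :: "'k::field \<Rightarrow> (nat \<Rightarrow> nat \<Rightarrow> nat \<Rightarrow> 'k) \<Rightarrow> (nat \<Rightarrow> nat \<Rightarrow> nat \<Rightarrow> 'k)" where
  "scal c F = (\<lambda>i a b. c * F i a b)"

definition fam_mat :: "(nat \<Rightarrow> nat) \<Rightarrow> (nat \<Rightarrow> nat) \<Rightarrow> (nat \<Rightarrow> nat \<Rightarrow> nat \<Rightarrow> 'k) \<Rightarrow> nat \<Rightarrow> 'k mat" where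
  "fam_mat nr nc F i = mat (nr i) (nc i) (\<lambda>(a, b). F i a b)"

definition fam_entries :: "(nat \<Rightarrow> 'k::zero mat) \<Rightarrow> nat \<Rightarrow> nat \<Rightarrow> nat \<Rightarrow> 'k" where
  "fam_entries G = (\<lambda>i a b. if a < dim_row (G i) \<and> b < dim_col (G i) then G i $$ (a, b) else 0)"

definition fam_space :: "nat \<Rightarrow> (nat \<Rightarrow> nat) \<Rightarrow> (nat \<Rightarrow> nat) \<Rightarrow> (nat \<Rightarrow> nat \<Rightarrow> nat \<Rightarrow> 'k::zero) set" where
  "fam_space r nr nc =
     {F. \<forall>i a b. (r \<le> i \<or> nr i \<le> a \<or> nc i \<le> b) \<longrightarrow> F i a b = 0}"

text \<open>The k-linear map of the standard projective resolution:
  (f_i)_i |-> (B_i f_i - f_{i+1} A_i)_i.  Its kernel is Hom(M,N), its cokernel Ext^1(M,N).\<close>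
definition delta :: "nat \<Rightarrow> 'k::field rep \<Rightarrow> 'k rep \<Rightarrow> (nat \<Rightarrow> nat \<Rightarrow> nat \<Rightarrow> 'k) \<Rightarrow> (nat \<Rightarrow> nat \<Rightarrow> nat \<Rightarrow> 'k)" where
  "delta r M N F = fam_entries (\<lambda>i. if i < r then
       snd N i * fam_mat (fst N) (fst M) F i
       - fam_mat (fst N) (fst M) F (Suc i mod r) * snd M i
     else 0\<^sub>m 0 0)"

definition Hom_space :: "nat \<Rightarrow> 'k::field rep \<Rightarrow> 'k rep \<Rightarrow> (nat \<Rightarrow> nat \<Rightarrow> nat \<Rightarrow> 'k) set" where
  "Hom_space r M N = {F \<in> fam_space r (fst N) (fst M).
     \<forall>i<r. snd N i * fam_mat (fst N) (fst M) F i = fam_mat (fst N) (fst M) F (Suc i mod r) * snd M i}"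

definition dim_Hom :: "nat \<Rightarrow> 'k::field rep \<Rightarrow> 'k rep \<Rightarrow> nat" where
  "dim_Hom r M N = vector_space.dim (scal :: 'k \<Rightarrow> _) (Hom_space r M N)"

definition dim_Ext1 :: "nat \<Rightarrow> 'k::field rep \<Rightarrow> 'k rep \<Rightarrow> nat" where
  "dim_Ext1 r M N =
     vector_space.dim (scal :: 'k \<Rightarrow> _) (fam_space r (\<lambda>i. fst N (Suc i mod r)) (fst M))
     - vector_space.dim (scal :: 'k \<Rightarrow> _) (delta r M N ` fam_space r (fst N) (fst M))"

definition brick_set :: "nat \<Rightarrow> nat \<Rightarrow> (nat \<Rightarrow> 'k::field rep) \<Rightarrow> bool" where
  "brick_set r n M \<longleftrightarrow> (\<forall>i<n. tube_obj r (M i)) \<and>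
     (\<forall>i<n. \<forall>j<n. dim_Hom r (M i) (M j) = (if i = j then 1 else 0))"

text \<open>P^T C P for the permutation matrix P with P e_i = e_(sigma i) has (i,j)-entry
  C (sigma i) (sigma j).\<close>
definition reducible_mat :: "nat \<Rightarrow> (nat \<Rightarrow> nat \<Rightarrow> nat) \<Rightarrow> bool" where
  "reducible_mat n C \<longleftrightarrow>
     (n \<ge> 2 \<and> (\<exists>\<sigma> k. \<sigma> permutes {..<n} \<and> 0 < k \<and> k < n \<and>
        (\<forall>i j. k \<le> i \<and> i < n \<and> j < k \<longrightarrow> C (\<sigma> i) (\<sigma> j) = 0)))
     \<or> (n = 1 \<and> C 0 0 = 0)"

definition irreducible_mat :: "nat \<Rightarrow> (nat \<Rightarrow> nat \<Rightarrow> nat) \<Rightarrow> bool" where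
  "irreducible_mat n C \<longleftrightarrow> \<not> reducible_mat n C"

end

theory Submission
  imports Defs
begin

text \<open>
  The map delta has kernel Hom(M,N) and cokernel Ext1(M,N), so rank-nullity gives
  dim Hom(M,N) - dim Ext1(M,N) >= <dim M, dim N>, where <x,y> is the Euler form of the cyclic
  quiver. Summing over a brick set whose dimension vectors add up to D, the Ext1-matrix C has
  entry sum at most n - <D,D> <= n, because the Euler form of a cyclic quiver is positive
  semidefinite: 2 <x,x> = sum_k (x k - x (k+1))^2.

  An irreducible matrix has a nonzero entry in every row, so entry sum <= n forces every row to
  contain a single 1: C is the matrix of a map f on {0..n-1}. Irreducibility says that f has no
  proper nonempty invariant subset, hence f is one n-cycle, which is the claimed normal form.
\<close>

context vector_space
begin

lemma dim_le_dim_kernel_plus_dim_image: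
  assumes lin: "Vector_Spaces.linear scale scale f" and S: "subspace S"
    and fin: "finite B0" "S \<subseteq> span B0"
  shows "dim S \<le> dim (S \<inter> {x. f x = 0}) + dim (f ` S)"
proof -
  interpret f: Vector_Spaces.linear scale scale f by (rule lin)
  let ?K = "S \<inter> {x. f x = 0}"
  obtain BK where BK: "BK \<subseteq> ?K" "independent BK" "?K \<subseteq> span BK" "card BK = dim ?K"
    using basis_exists by blast
  obtain B where B: "BK \<subseteq> B" "B \<subseteq> S" "independent B" "S \<subseteq> span B"
    using maximal_independent_subset_extend[of BK S] BK by auto
  have "finite B" using independent_span_bound[OF fin(1) B(3)] B(2) fin(2) by auto
  define R where "R = B - BK"
  have "span R \<subseteq> S" using span_minimal[of R S] S B(2) by (auto simp: R_def)
  have inj_R: "inj_on f (span R)"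
  proof (subst f.inj_on_iff_eq_0[OF subspace_span], intro ballI impI)
    fix x assume x: "x \<in> span R" "f x = 0"
    then have "x \<in> span BK" using \<open>span R \<subseteq> S\<close> BK(3) by auto
    \<comment> \<open>the coordinates of x in B are supported both on R and on BK, which are disjoint\<close>
    have "representation B x = representation R x"
      using representation_extend[OF B(3) x(1)] by (auto simp: R_def)
    moreover have "representation B x = representation BK x"
      using representation_extend[OF B(3) \<open>x \<in> span BK\<close> B(1)] .
    ultimately have "representation B x b = 0" for b
      using representation_ne_zero[of R x b] representation_ne_zero[of BK x b] by (auto simp: R_def)
    moreover have "x \<in> span B" using x(1) span_mono[of R B] by (auto simp: R_def)
    ultimately show "x = 0" using sum_nonzero_representation_eq[OF B(3), of x] by simp
  qed
  obtain C where C: "C \<subseteq> f ` S" "independent C" "f ` S \<subseteq> span C" "card C = dim (f ` S)"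
    using basis_exists by blast
  have "f ` S \<subseteq> span (f ` B)" using f.span_image B(4) by auto
  then have "finite C" using independent_span_bound[of "f ` B" C] \<open>finite B\<close> C by auto
  have "independent (f ` R)"
    using f.independent_injective_image[OF independent_mono[OF B(3)] inj_R] by (auto simp: R_def)
  moreover have "f ` R \<subseteq> span C" using C(3) B(2) by (auto simp: R_def)
  ultimately have "card (f ` R) \<le> card C" using independent_span_bound[OF \<open>finite C\<close>] by auto
  moreover have "card (f ` R) = card R"
    using inj_R span_superset by (intro card_image) (blast intro: inj_on_subset)
  moreover have "card B = card BK + card R"
    using \<open>finite B\<close> B(1) by (simp add: R_def card_Diff_subset card_mono finite_subset)
  ultimately show ?thesis using basis_card_eq_dim[OF B(2,4,3)] BK(4) C(4) by simp
qed

end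

interpretation fam: vector_space "scal :: 'k::field \<Rightarrow> (nat \<Rightarrow> nat \<Rightarrow> nat \<Rightarrow> 'k) \<Rightarrow> _"
  by unfold_locales (auto simp: scal_def fun_eq_iff algebra_simps)

lemma sum_fam_apply: "(sum F A) i a b = (\<Sum>x\<in>A. F x i a b)"
  by (induction A rule: infinite_finite_induct) auto

definition fam_index :: "nat \<Rightarrow> (nat \<Rightarrow> nat) \<Rightarrow> (nat \<Rightarrow> nat) \<Rightarrow> (nat \<times> nat \<times> nat) set" where
  "fam_index r nr nc = (SIGMA i:{..<r}. {..<nr i} \<times> {..<nc i})"

definition unit_fam :: "nat \<times> nat \<times> nat \<Rightarrow> nat \<Rightarrow> nat \<Rightarrow> nat \<Rightarrow> 'k::field" where
  "unit_fam p = (\<lambda>i a b. if (i, a, b) = p then 1 else 0)"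

definition unit_fams :: "nat \<Rightarrow> (nat \<Rightarrow> nat) \<Rightarrow> (nat \<Rightarrow> nat) \<Rightarrow> (nat \<Rightarrow> nat \<Rightarrow> nat \<Rightarrow> 'k::field) set" where
  "unit_fams r nr nc = unit_fam ` fam_index r nr nc"

lemma finite_fam_index: "finite (fam_index r nr nc)"
  by (simp add: fam_index_def)

lemma inj_unit_fam: "inj unit_fam"
  by (rule injI) (auto simp: unit_fam_def fun_eq_iff split: if_splits)

lemma finite_unit_fams: "finite (unit_fams r nr nc)"
  by (simp add: unit_fams_def finite_fam_index)

lemma card_unit_fams:
  "card (unit_fams r nr nc :: (nat \<Rightarrow> nat \<Rightarrow> nat \<Rightarrow> 'k::field) set) = (\<Sum>i<r. nr i * nc i)"
  unfolding unit_fams_def card_image[OF inj_on_subset[OF inj_unit_fam subset_UNIV]]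
  by (simp add: fam_index_def)

lemma unit_fams_subset_fam_space: "unit_fams r nr nc \<subseteq> fam_space r nr nc"
  by (auto simp: unit_fams_def fam_index_def fam_space_def unit_fam_def)

lemma independent_unit_fams:
  "fam.independent (unit_fams r nr nc :: (nat \<Rightarrow> nat \<Rightarrow> nat \<Rightarrow> 'k::field) set)"
proof (rule fam.independent_if_scalars_zero[OF finite_unit_fams])
  fix g :: "_ \<Rightarrow> 'k" and F :: "nat \<Rightarrow> nat \<Rightarrow> nat \<Rightarrow> 'k"
  assume sum0: "(\<Sum>x\<in>unit_fams r nr nc. scal (g x) x) = 0" and F: "F \<in> unit_fams r nr nc"
  then obtain i a b where F_eq: "F = unit_fam (i, a, b)" by (auto simp: unit_fams_def)
  have "0 = (\<Sum>x\<in>unit_fams r nr nc. scal (g x) x) i a b" using sum0 by simp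
  also have "\<dots> = (\<Sum>x\<in>unit_fams r nr nc. if x = F then g x else 0)"
    unfolding sum_fam_apply
  proof (rule sum.cong[OF refl])
    fix x :: "nat \<Rightarrow> nat \<Rightarrow> nat \<Rightarrow> 'k" assume "x \<in> unit_fams r nr nc"
    then obtain i' a' b' where "x = unit_fam (i', a', b')" by (auto simp: unit_fams_def)
    then show "scal (g x) x i a b = (if x = F then g x else 0)"
      using F_eq by (auto simp: scal_def unit_fam_def fun_eq_iff)
  qed
  also have "\<dots> = g F" by (subst sum.delta[OF finite_unit_fams]) (simp add: F)
  finally show "g F = 0" by simp
qed

lemma fam_space_subset_span_unit_fams:
  "fam_space r nr nc \<subseteq> fam.span (unit_fams r nr nc :: (nat \<Rightarrow> nat \<Rightarrow> nat \<Rightarrow> 'k::field) set)"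
proof
  fix F :: "nat \<Rightarrow> nat \<Rightarrow> nat \<Rightarrow> 'k" assume F: "F \<in> fam_space r nr nc"
  have "F = (\<Sum>p\<in>fam_index r nr nc. scal (case p of (i, a, b) \<Rightarrow> F i a b) (unit_fam p))"
  proof (intro ext)
    fix i a b
    have "(\<Sum>p\<in>fam_index r nr nc. scal (case p of (i, a, b) \<Rightarrow> F i a b) (unit_fam p)) i a b
        = (\<Sum>p\<in>fam_index r nr nc. if p = (i, a, b) then F i a b else 0)"
      unfolding sum_fam_apply by (rule sum.cong) (auto simp: scal_def unit_fam_def)
    also have "\<dots> = F i a b"
      using F finite_fam_index[of r nr nc] by (auto simp: fam_index_def fam_space_def)
    finally show "F i a b
        = (\<Sum>p\<in>fam_index r nr nc. scal (case p of (i, a, b) \<Rightarrow> F i a b) (unit_fam p)) i a b"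
      by simp
  qed
  also have "\<dots> \<in> fam.span (unit_fams r nr nc)"
    by (intro fam.span_sum fam.span_scale fam.span_base) (simp add: unit_fams_def)
  finally show "F \<in> fam.span (unit_fams r nr nc)" .
qed

lemma dim_fam_space:
  "fam.dim (fam_space r nr nc :: (nat \<Rightarrow> nat \<Rightarrow> nat \<Rightarrow> 'k::field) set) = (\<Sum>i<r. nr i * nc i)"
  using fam.dim_unique[OF unit_fams_subset_fam_space fam_space_subset_span_unit_fams
      independent_unit_fams card_unit_fams] .

lemma subspace_fam_space: "fam.subspace (fam_space r nr nc)"
  by (auto simp: fam.subspace_def fam_space_def scal_def)

lemma tube_obj_arrow_carrier:
  "tube_obj r M \<Longrightarrow> i < r \<Longrightarrow> snd M i \<in> carrier_mat (fst M (Suc i mod r)) (fst M i)"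
  by (simp add: tube_obj_def)

lemma delta_entry:
  assumes "tube_obj r M" "tube_obj r N"
  shows "delta r M N F i a b =
    (if i < r \<and> a < fst N (Suc i mod r) \<and> b < fst M i
     then (\<Sum>c<fst N i. snd N i $$ (a, c) * F i c b)
        - (\<Sum>c<fst M (Suc i mod r). F (Suc i mod r) a c * snd M i $$ (c, b))
     else 0)"
  using tube_obj_arrow_carrier[OF assms(1), of i] tube_obj_arrow_carrier[OF assms(2), of i]
  by (auto simp: delta_def fam_entries_def fam_mat_def scalar_prod_def atLeast0LessThan
      intro!: sum.cong)

lemma linear_delta:
  assumes "tube_obj r M" "tube_obj r N"
  shows "Vector_Spaces.linear scal scal (delta r M N)"
  unfolding Vector_Spaces.linear_iff
proof (intro conjI allI)
  show "delta r M N (F + G) = delta r M N F + delta r M N G" for F G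
    by (intro ext) (simp add: delta_entry[OF assms] sum.distrib algebra_simps)
  show "delta r M N (scal c F) = scal c (delta r M N F)" for c F
    by (intro ext) (simp add: delta_entry[OF assms] scal_def sum_distrib_left algebra_simps)
qed (rule fam.vector_space_axioms)+

lemma Hom_space_eq_kernel:
  assumes "tube_obj r M" "tube_obj r N"
  shows "Hom_space r M N = fam_space r (fst N) (fst M) \<inter> {F. delta r M N F = 0}"
proof -
  have "delta r M N F = 0 \<longleftrightarrow>
      (\<forall>i<r. snd N i * fam_mat (fst N) (fst M) F i = fam_mat (fst N) (fst M) F (Suc i mod r) * snd M i)"
    for F
  proof -
    let ?X = "\<lambda>i. snd N i * fam_mat (fst N) (fst M) F i"
    let ?Y = "\<lambda>i. fam_mat (fst N) (fst M) F (Suc i mod r) * snd M i"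
    have dims: "dim_row (?X i) = fst N (Suc i mod r)" "dim_col (?X i) = fst M i"
      "dim_row (?Y i) = fst N (Suc i mod r)" "dim_col (?Y i) = fst M i" if "i < r" for i
      using tube_obj_arrow_carrier[OF assms(1) that] tube_obj_arrow_carrier[OF assms(2) that]
      by (auto simp: fam_mat_def)
    have "delta r M N F = 0 \<longleftrightarrow>
        (\<forall>i<r. \<forall>a<fst N (Suc i mod r). \<forall>b<fst M i. ?X i $$ (a, b) = ?Y i $$ (a, b))"
      using dims by (auto simp: delta_def fam_entries_def fun_eq_iff simp del: index_mult_mat)
    also have "\<dots> \<longleftrightarrow> (\<forall>i<r. ?X i = ?Y i)"
      using dims by (auto simp: mat_eq_iff simp del: index_mult_mat)
    finally show ?thesis .
  qed
  then show ?thesis by (auto simp: Hom_space_def)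
qed

lemma delta_image_subset:
  assumes "tube_obj r M" "tube_obj r N"
  shows "delta r M N ` A \<subseteq> fam_space r (\<lambda>i. fst N (Suc i mod r)) (fst M)"
  by (auto simp: fam_space_def delta_entry[OF assms])

definition euler_form :: "nat \<Rightarrow> (nat \<Rightarrow> int) \<Rightarrow> (nat \<Rightarrow> int) \<Rightarrow> int" where
  "euler_form r x y = (\<Sum>k<r. x k * y k) - (\<Sum>k<r. x k * y (Suc k mod r))"

lemma dim_Ext1_le:
  fixes M N :: "'k::field rep"
  assumes "tube_obj r M" "tube_obj r N"
  shows "int (dim_Ext1 r M N)
    \<le> int (dim_Hom r M N) - euler_form r (\<lambda>k. int (fst M k)) (\<lambda>k. int (fst N k))"
proof -
  let ?S = "fam_space r (fst N) (fst M) :: (nat \<Rightarrow> nat \<Rightarrow> nat \<Rightarrow> 'k) set"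
  let ?T = "fam_space r (\<lambda>i. fst N (Suc i mod r)) (fst M) :: (nat \<Rightarrow> nat \<Rightarrow> nat \<Rightarrow> 'k) set"
  have rank_nullity: "fam.dim ?S \<le> dim_Hom r M N + fam.dim (delta r M N ` ?S)"
    using fam.dim_le_dim_kernel_plus_dim_image[OF linear_delta[OF assms] subspace_fam_space
        finite_unit_fams fam_space_subset_span_unit_fams]
    by (simp add: dim_Hom_def Hom_space_eq_kernel[OF assms])
  have "delta r M N ` ?S \<subseteq> fam.span (unit_fams r (\<lambda>i. fst N (Suc i mod r)) (fst M))"
    using delta_image_subset[OF assms] fam_space_subset_span_unit_fams by blast
  then have "fam.dim (delta r M N ` ?S) \<le> card (unit_fams r (\<lambda>i. fst N (Suc i mod r)) (fst M)
      :: (nat \<Rightarrow> nat \<Rightarrow> nat \<Rightarrow> 'k) set)"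
    by (rule fam.dim_le_card[OF _ finite_unit_fams])
  then have image_le: "fam.dim (delta r M N ` ?S) \<le> fam.dim ?T"
    by (simp only: card_unit_fams dim_fam_space)
  have "int (dim_Ext1 r M N) = int (fam.dim ?T) - int (fam.dim (delta r M N ` ?S))"
    using image_le by (simp add: dim_Ext1_def)
  moreover have "int (fam.dim ?S) = (\<Sum>k<r. int (fst M k) * int (fst N k))"
    unfolding dim_fam_space of_nat_sum of_nat_mult by (simp only: mult.commute)
  moreover have "int (fam.dim ?T) = (\<Sum>k<r. int (fst M k) * int (fst N (Suc k mod r)))"
    unfolding dim_fam_space of_nat_sum of_nat_mult by (simp only: mult.commute)
  ultimately show ?thesis
    using rank_nullity unfolding euler_form_def by linarith
qed

lemma euler_form_sum:
  "euler_form r (\<lambda>k. \<Sum>i\<in>I. x i k) (\<lambda>k. \<Sum>j\<in>J. y j k)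
     = (\<Sum>i\<in>I. \<Sum>j\<in>J. euler_form r (x i) (y j))"
proof -
  have swap: "(\<Sum>k<r. (\<Sum>i\<in>I. x i k) * (\<Sum>j\<in>J. z j k)) = (\<Sum>i\<in>I. \<Sum>j\<in>J. \<Sum>k<r. x i k * z j k)"
    for z :: "_ \<Rightarrow> nat \<Rightarrow> int"
  proof -
    have "(\<Sum>k<r. (\<Sum>i\<in>I. x i k) * (\<Sum>j\<in>J. z j k)) = (\<Sum>k<r. \<Sum>i\<in>I. \<Sum>j\<in>J. x i k * z j k)"
      by (simp only: sum_product)
    also have "\<dots> = (\<Sum>i\<in>I. \<Sum>k<r. \<Sum>j\<in>J. x i k * z j k)"
      by (rule sum.swap)
    also have "\<dots> = (\<Sum>i\<in>I. \<Sum>j\<in>J. \<Sum>k<r. x i k * z j k)"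
      by (rule sum.cong[OF refl], rule sum.swap)
    finally show ?thesis .
  qed
  show ?thesis
    unfolding euler_form_def swap by (simp add: sum_subtractf)
qed

lemma sum_lessThan_Suc_mod:
  fixes g :: "nat \<Rightarrow> 'a::comm_monoid_add"
  assumes "0 < r"
  shows "(\<Sum>k<r. g (Suc k mod r)) = (\<Sum>k<r. g k)"
proof -
  obtain m where r: "r = Suc m" using assms by (cases r) auto
  have "(\<Sum>k<Suc m. g (Suc k mod Suc m)) = (\<Sum>k<m. g (Suc k mod Suc m)) + g 0"
    by (simp only: sum.lessThan_Suc mod_self)
  also have "(\<Sum>k<m. g (Suc k mod Suc m)) = (\<Sum>k<m. g (Suc k))"
    by (rule sum.cong) simp_all
  also have "\<dots> + g 0 = (\<Sum>k<Suc m. g k)"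
    by (simp only: sum.lessThan_Suc_shift add.commute)
  finally show ?thesis by (simp only: r)
qed

lemma euler_form_self_nonneg:
  assumes "0 < r"
  shows "0 \<le> euler_form r x x"
proof -
  have "2 * (\<Sum>k<r. x k * x (Suc k mod r)) \<le> (\<Sum>k<r. x k * x k + x (Suc k mod r) * x (Suc k mod r))"
    unfolding sum_distrib_left
  proof (rule sum_mono)
    fix k
    have "0 \<le> (x k - x (Suc k mod r))\<^sup>2" by simp
    then show "2 * (x k * x (Suc k mod r)) \<le> x k * x k + x (Suc k mod r) * x (Suc k mod r)"
      by (simp add: power2_eq_square algebra_simps)
  qed
  also have "\<dots> = 2 * (\<Sum>k<r. x k * x k)"
    using sum_lessThan_Suc_mod[OF assms, of "\<lambda>k. x k * x k"] by (simp add: sum.distrib)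
  finally show ?thesis by (simp add: euler_form_def)
qed

lemma brick_set_sum_dim_Ext1_le:
  fixes M :: "nat \<Rightarrow> 'k::field rep"
  assumes "0 < r" and bricks: "brick_set r n M"
  shows "(\<Sum>i<n. \<Sum>j<n. dim_Ext1 r (M i) (M j)) \<le> n"
proof -
  define d where "d i k = int (fst (M i) k)" for i k
  have "int (dim_Ext1 r (M i) (M j)) \<le> int (dim_Hom r (M i) (M j)) - euler_form r (d i) (d j)"
    if "i < n" "j < n" for i j
    unfolding d_def using dim_Ext1_le[of r "M i" "M j"] bricks that by (simp add: brick_set_def)
  then have "int (\<Sum>i<n. \<Sum>j<n. dim_Ext1 r (M i) (M j))
      \<le> (\<Sum>i<n. \<Sum>j<n. int (dim_Hom r (M i) (M j)) - euler_form r (d i) (d j))"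
    unfolding of_nat_sum by (intro sum_mono) simp
  also have "\<dots> = int n - euler_form r (\<lambda>k. \<Sum>i<n. d i k) (\<lambda>k. \<Sum>j<n. d j k)"
  proof -
    have "int (dim_Hom r (M i) (M j)) = (if i = j then 1 else 0)" if "i < n" "j < n" for i j
      using bricks that by (simp add: brick_set_def)
    then have "(\<Sum>i<n. \<Sum>j<n. int (dim_Hom r (M i) (M j)))
        = (\<Sum>i<n. \<Sum>j<n. if i = j then 1 else 0)"
      by (intro sum.cong) auto
    also have "\<dots> = int n" by simp
    finally have "(\<Sum>i<n. \<Sum>j<n. int (dim_Hom r (M i) (M j))) = int n" .
    then show ?thesis by (simp add: euler_form_sum sum_subtractf)
  qed
  also have "\<dots> \<le> int n"
    using euler_form_self_nonneg[OF \<open>0 < r\<close>] by simp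
  finally show ?thesis by (simp only: of_nat_le_iff)
qed

lemma reducible_matI:
  fixes C :: "nat \<Rightarrow> nat \<Rightarrow> nat"
  assumes T: "T \<subseteq> {..<n}" "T \<noteq> {}" "T \<noteq> {..<n}"
    and zero_block: "\<And>u t. u < n \<Longrightarrow> u \<notin> T \<Longrightarrow> t \<in> T \<Longrightarrow> C u t = 0"
  shows "reducible_mat n C"
proof -
  have finT: "finite T" using T(1) finite_subset by blast
  define k where "k = card T"
  define xs where "xs = sorted_list_of_set T @ sorted_list_of_set ({..<n} - T)"
  have xs_set: "set xs = {..<n}" using T(1) finT by (auto simp: xs_def)
  have xs_distinct: "distinct xs" using finT by (simp add: xs_def)
  have xs_length: "length xs = n" using distinct_card[OF xs_distinct] xs_set by simp
  have "0 < k" "k < n"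
    using finT T psubset_card_mono[of "{..<n}" T] by (auto simp: k_def card_gt_0_iff)
  then have "n \<ge> 2" by linarith
  define \<sigma> where "\<sigma> i = (if i < n then xs ! i else i)" for i
  have "\<sigma> permutes {..<n}"
  proof (rule bij_imp_permutes)
    have "bij_betw ((!) xs) {..<n} {..<n}"
      using bij_betw_nth[OF xs_distinct] xs_set xs_length by simp
    then show "bij_betw \<sigma> {..<n} {..<n}"
      by (rule bij_betw_cong[THEN iffD1, rotated]) (simp add: \<sigma>_def)
  qed (simp add: \<sigma>_def)
  moreover have "C (\<sigma> i) (\<sigma> j) = 0" if "k \<le> i" "i < n" "j < k" for i j
  proof (rule zero_block)
    have "i - k < length (sorted_list_of_set ({..<n} - T))"
      using that T(1) finT by (simp add: k_def card_Diff_subset)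
    then have "sorted_list_of_set ({..<n} - T) ! (i - k) \<in> set (sorted_list_of_set ({..<n} - T))"
      by (rule nth_mem)
    then have "sorted_list_of_set ({..<n} - T) ! (i - k) \<in> {..<n} - T"
      by simp
    moreover have "\<sigma> i = sorted_list_of_set ({..<n} - T) ! (i - k)"
      using that finT by (simp add: \<sigma>_def xs_def k_def nth_append)
    ultimately show "\<sigma> i < n" "\<sigma> i \<notin> T" by simp_all
    have "\<sigma> j = sorted_list_of_set T ! j"
      using that finT by (simp add: \<sigma>_def xs_def k_def nth_append)
    then show "\<sigma> j \<in> T"
      using that finT nth_mem[of j "sorted_list_of_set T"] by (simp add: k_def)
  qed
  ultimately show ?thesis
    unfolding reducible_mat_def using \<open>n \<ge> 2\<close> \<open>0 < k\<close> \<open>k < n\<close> by blast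
qed

lemma irreducible_mat_row_nonzero:
  assumes "irreducible_mat n C" "i < n"
  shows "\<exists>j<n. C i j \<noteq> 0"
proof (rule ccontr)
  assume "\<not> (\<exists>j<n. C i j \<noteq> 0)"
  then have zero_row: "C i j = 0" if "j < n" for j using that by blast
  have "reducible_mat n C"
  proof (cases "n = 1")
    case True
    then show ?thesis using zero_row \<open>i < n\<close> by (simp add: reducible_mat_def)
  next
    case False
    define j where "j = (if i = 0 then 1 else 0 :: nat)"
    have "j < n" "j \<noteq> i" using False \<open>i < n\<close> by (auto simp: j_def)
    then show ?thesis
      by (intro reducible_matI[of "{..<n} - {i}"]) (use \<open>i < n\<close> zero_row in auto)
  qed
  then show False using assms(1) by (simp add: irreducible_mat_def)
qed

lemma eq_1_if_sum_le_card:
  fixes R :: "'a \<Rightarrow> nat"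
  assumes "finite A" "\<And>a. a \<in> A \<Longrightarrow> 1 \<le> R a" "sum R A \<le> card A" "a \<in> A"
  shows "R a = 1"
proof -
  have "(\<Sum>a\<in>A. R a - 1) = sum R A - card A"
    using assms(2) by (simp add: sum_subtractf_nat)
  then have "(\<Sum>a\<in>A. R a - 1) = 0" using assms(3) by simp
  then show ?thesis using assms by (simp add: le_antisym)
qed

lemma minimal_map_cyclic:
  fixes f :: "nat \<Rightarrow> nat"
  assumes maps: "\<And>i. i < n \<Longrightarrow> f i < n" and "0 < n"
    and minimal: "\<And>T. T \<subseteq> {..<n} \<Longrightarrow> T \<noteq> {} \<Longrightarrow> f ` T \<subseteq> T \<Longrightarrow> T = {..<n}"
  shows "\<exists>\<sigma>. \<sigma> permutes {..<n} \<and> (\<forall>i<n. f (\<sigma> i) = \<sigma> (Suc i mod n))"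
proof -
  have orbit_in: "(f ^^ m) a < n" if "a < n" for a m
    using that maps by (induction m) auto
  have orbit_all: "range (\<lambda>m. (f ^^ m) a) = {..<n}" if "a < n" for a
  proof (rule minimal)
    show "f ` range (\<lambda>m. (f ^^ m) a) \<subseteq> range (\<lambda>m. (f ^^ m) a)"
      by (auto intro: range_eqI[where x = "Suc m" for m])
  qed (use that orbit_in in auto)
  define g where "g m = (f ^^ m) 0" for m
  have "0 \<in> range (\<lambda>m. (f ^^ m) (f 0))" using orbit_all[of "f 0"] maps \<open>0 < n\<close> by auto
  then obtain m where "(f ^^ m) (f 0) = 0" by (metis rangeE)
  then have "g (Suc m) = 0" by (simp only: g_def funpow_Suc_right comp_apply)
  then have period_ex: "\<exists>p. 0 < p \<and> g p = 0" by blast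
  define p where "p = (LEAST p. 0 < p \<and> g p = 0)"
  have p: "0 < p" "g p = 0" using LeastI_ex[OF period_ex] by (simp_all add: p_def)
  have p_least: "g m \<noteq> 0" if "0 < m" "m < p" for m
    using not_less_Least[of m "\<lambda>p. 0 < p \<and> g p = 0"] that by (simp add: p_def)
  have inj_g: "inj_on g {..<p}"
    using inj_on_funpow_least[of p f 0] p p_least unfolding g_def by (simp add: atLeast0LessThan)
  have "range g = g ` {..<p}"
    using p funpow_mod_eq[where f = f and n = p and x = 0]
    by (auto simp: g_def intro!: image_eqI[where x = "m mod p" for m])
  then have g_image: "g ` {..<p} = {..<n}" using orbit_all[of 0] \<open>0 < n\<close> by (simp add: g_def)
  then have "p = n" using card_image[OF inj_g] by simp
  define \<sigma> where "\<sigma> i = (if i < n then g i else i)" for i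
  have "bij_betw g {..<n} {..<n}"
    using inj_g g_image \<open>p = n\<close> by (simp add: bij_betw_def)
  then have "bij_betw \<sigma> {..<n} {..<n}"
    by (rule bij_betw_cong[THEN iffD1, rotated]) (simp add: \<sigma>_def)
  then have "\<sigma> permutes {..<n}" by (rule bij_imp_permutes) (simp add: \<sigma>_def)
  moreover have "f (\<sigma> i) = \<sigma> (Suc i mod n)" if "i < n" for i
  proof (cases "Suc i < n")
    case True
    then show ?thesis using that by (simp add: \<sigma>_def g_def)
  next
    case False
    then have "Suc i = n" using that by simp
    then show ?thesis using p \<open>p = n\<close> that by (auto simp: \<sigma>_def g_def)
  qed
  ultimately show ?thesis by blast
qed

lemma cyclic_if_irreducible_sum_le:
  fixes C :: "nat \<Rightarrow> nat \<Rightarrow> nat"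
  assumes irr: "irreducible_mat n C" and sum_le: "(\<Sum>i<n. \<Sum>j<n. C i j) \<le> n"
  shows "\<exists>\<sigma>. \<sigma> permutes {..<n} \<and>
           (\<forall>i<n. \<forall>j<n. C (\<sigma> i) (\<sigma> j) = (if j = Suc i mod n then 1 else 0))"
proof (cases "n = 0")
  case True
  then show ?thesis by (auto intro!: exI[of _ id] permutes_id)
next
  case False
  have "1 \<le> (\<Sum>j<n. C i j)" if "i < n" for i
    using irreducible_mat_row_nonzero[OF irr that]
    by (metis finite_lessThan leI less_one lessThan_iff member_le_sum order.trans zero_le)
  then have row_sum: "(\<Sum>j<n. C i j) = 1" if "i < n" for i
    using eq_1_if_sum_le_card[of "{..<n}" "\<lambda>i. \<Sum>j<n. C i j"] sum_le that by simp
  have "\<exists>a<n. C i a = 1 \<and> (\<forall>b<n. a \<noteq> b \<longrightarrow> C i b = 0)" if "i < n" for i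
    using row_sum[OF that] sum_eq_1_iff[of "{..<n}" "C i"] by auto
  then obtain f where f: "\<And>i. i < n \<Longrightarrow> f i < n"
    and C_f: "\<And>i j. i < n \<Longrightarrow> j < n \<Longrightarrow> C i j = (if j = f i then 1 else 0)"
    by metis
  have "T = {..<n}" if "T \<subseteq> {..<n}" "T \<noteq> {}" "f ` T \<subseteq> T" for T
  proof (rule ccontr)
    assume "T \<noteq> {..<n}"
    then have "reducible_mat n C"
      by (intro reducible_matI[of "{..<n} - T"]) (use that C_f in auto)
    then show False using irr by (simp add: irreducible_mat_def)
  qed
  then obtain \<sigma> where \<sigma>: "\<sigma> permutes {..<n}" "\<And>i. i < n \<Longrightarrow> f (\<sigma> i) = \<sigma> (Suc i mod n)"
    using minimal_map_cyclic[of n f] f False by blast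
  have "C (\<sigma> i) (\<sigma> j) = (if j = Suc i mod n then 1 else 0)" if "i < n" "j < n" for i j
  proof -
    have "C (\<sigma> i) (\<sigma> j) = (if \<sigma> j = \<sigma> (Suc i mod n) then 1 else 0)"
      using that C_f[of "\<sigma> i" "\<sigma> j"] \<sigma>(2) permutes_in_image[OF \<sigma>(1)] by simp
    then show ?thesis by (simp add: inj_eq[OF permutes_inj[OF \<sigma>(1)]])
  qed
  with \<sigma>(1) show ?thesis by blast
qed

theorem lemma5p1:
  fixes r n :: nat and M :: "nat \<Rightarrow> 'k::alg_closed_field rep"
  assumes "r \<ge> 1"
    and "brick_set r n M"
    and "irreducible_mat n (\<lambda>i j. dim_Ext1 r (M i) (M j))"
  shows "\<exists>\<sigma>. \<sigma> permutes {..<n} \<and>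
           (\<forall>i<n. \<forall>j<n. dim_Ext1 r (M (\<sigma> i)) (M (\<sigma> j)) = (if j = Suc i mod n then 1 else 0))"
proof -
  have "(\<Sum>i<n. \<Sum>j<n. dim_Ext1 r (M i) (M j)) \<le> n"
    using brick_set_sum_dim_Ext1_le[of r n M] assms(1,2) by simp
  then show ?thesis by (rule cyclic_if_irreducible_sum_le[OF assms(3)])
qed

end
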